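(* Let $n$ be a positive integer and $(A_i)_{i\in I}$ a family of pairwise commuting matrices in $M_n(\mathbb{C})$ such that $\sum_{i\in I}A_i^*A_i$ converges to a scalar matrix (a scalar multiple of the identity). Then every $A_i$ is normal, and consequently the $A_i$ generate a commutative $C^*$-algebra.
   Context: The sum over the (possibly infinite) index set $I$ is the limit of the net of finite partial sums. *)

theory Defs
  imports "HOL-Analysis.Analysis"
begin

definition adjoint_mat :: "complex ^'n ^'n \<Rightarrow> complex ^'n ^'n" where
  "adjoint_mat A = (\<chi> i j. cnj (A $ j $ i))"

definition normal_mat :: "complex ^'n ^'n \<Rightarrow> bool" where
  "normal_mat A \<longleftrightarrow> adjoint_mat A ** A = A ** adjoint_mat A"

text \<open>The *-subalgebra of M_n(C) generated by a set of matrices S. In finite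
  dimension every linear subspace is closed, so this is the C*-algebra generated by S.\<close>
inductive_set star_alg_gen :: "(complex ^'n ^'n) set \<Rightarrow> (complex ^'n ^'n) set"
  for S :: "(complex ^'n ^'n) set" where
  gen: "A \<in> S \<Longrightarrow> A \<in> star_alg_gen S"
| zero: "0 \<in> star_alg_gen S"
| add: "A \<in> star_alg_gen S \<Longrightarrow> B \<in> star_alg_gen S \<Longrightarrow> A + B \<in> star_alg_gen S"
| smult: "A \<in> star_alg_gen S \<Longrightarrow> mat (c::complex) ** A \<in> star_alg_gen S"
| mult: "A \<in> star_alg_gen S \<Longrightarrow> B \<in> star_alg_gen S \<Longrightarrow> A ** B \<in> star_alg_gen S"
| adj: "A \<in> star_alg_gen S \<Longrightarrow> adjoint_mat A \<in> star_alg_gen S"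

end

theory Submission
  imports Defs
begin

text \<open>Fix \<open>B = A\<^sub>j\<close> and let \<open>q(y) = \<parallel>By\<parallel>\<^sup>2 - \<parallel>B\<^sup>*y\<parallel>\<^sup>2\<close> be the quadratic form of the
  self-commutator \<open>B\<^sup>*B - BB\<^sup>*\<close>. Using that \<open>B\<close> commutes with every \<open>A\<^sub>i\<close> and
  \<open>\<Sum>A\<^sub>i\<^sup>*A\<^sub>i = c\<close>, one finds for every vector \<open>x\<close> and every real \<open>m\<close>
  \<open>\<Sum>\<^sub>i (\<parallel>[B\<^sup>*,A\<^sub>i]x\<parallel>\<^sup>2 + q(A\<^sub>ix) - m\<parallel>A\<^sub>ix\<parallel>\<^sup>2) = Re c (q(x) - m\<parallel>x\<parallel>\<^sup>2)\<close>.
  If \<open>m\<close> is the minimum of \<open>q\<close> on the unit sphere and \<open>q(x) = m\<parallel>x\<parallel>\<^sup>2\<close>, all summands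
  are nonnegative and sum to zero, so \<open>[B\<^sup>*,A\<^sub>i]x = 0\<close> for all \<open>i\<close>. Taking \<open>i = j\<close> gives
  \<open>q(x) = 0\<close>, hence \<open>m = 0\<close>; as \<open>q\<close> has trace zero and is now nonnegative, it vanishes on
  the standard basis, so \<open>[B\<^sup>*,A\<^sub>i] = 0\<close> on the whole space. Thus the \<open>A\<^sub>i\<close> and their
  adjoints commute pairwise, and so does the *-algebra they generate.\<close>

lemma has_sum_diff:
  fixes f g :: "'a \<Rightarrow> 'b::topological_ab_group_add"
  assumes "(f has_sum a) A" "(g has_sum b) A"
  shows "((\<lambda>x. f x - g x) has_sum (a - b)) A"
  using has_sum_add[OF assms(1), of "\<lambda>x. - g x" "- b"] assms(2) by (simp add: has_sum_uminus)

lemma has_sum_0_nonnegD: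
  fixes f :: "'a \<Rightarrow> real"
  assumes "(f has_sum 0) I" "\<And>i. i \<in> I \<Longrightarrow> 0 \<le> f i" "i \<in> I"
  shows "f i = 0"
proof -
  have "f i \<le> 0"
    using has_sum_mono'[OF has_sum_finite[of "{i}" f] assms(1)] assms(2,3) by simp
  with assms(2,3) show ?thesis by (simp add: order_antisym)
qed

lemma adjoint_mat_adjoint_mat [simp]: "adjoint_mat (adjoint_mat M) = M"
  unfolding adjoint_mat_def by (simp add: vec_eq_iff)

lemma adjoint_mat_mult: "adjoint_mat (M ** N) = adjoint_mat N ** adjoint_mat M"
  unfolding adjoint_mat_def matrix_matrix_mult_def by (simp add: vec_eq_iff mult.commute)

lemma matrix_vector_mult_axis_nth: "(M *v axis k 1) $ l = M $ l $ k"
  unfolding matrix_vector_mult_def axis_def by (simp add: if_distrib if_distribR cong: if_cong)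

lemma matrix_add_rdistrib: "(B + C) ** A = B ** A + C ** A"
  by (vector matrix_matrix_mult_def sum.distrib[symmetric] field_simps)

lemma mat_mult_commute: "mat (c::'a::comm_semiring_1) ** M = M ** mat c"
  unfolding mat_def matrix_matrix_mult_def
  by (simp add: vec_eq_iff if_distrib if_distribR mult.commute cong: if_cong)

definition cinner :: "complex ^'n \<Rightarrow> complex ^'n \<Rightarrow> complex" where
  "cinner x y = (\<Sum>k\<in>UNIV. x $ k * cnj (y $ k))"

lemma cinner_matrix_left: "cinner (M *v x) y = cinner x (adjoint_mat M *v y)"
  unfolding cinner_def matrix_vector_mult_def adjoint_mat_def
  by (simp add: sum_distrib_left sum_distrib_right) (subst sum.swap, simp add: mult_ac)

lemma cinner_matrix_right: "cinner x (M *v y) = cinner (adjoint_mat M *v x) y"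
  by (metis adjoint_mat_adjoint_mat cinner_matrix_left)

lemma cinner_commute: "cinner y x = cnj (cinner x y)"
  unfolding cinner_def by (simp add: cnj_sum mult.commute)

lemma cinner_diff_left: "cinner (x - y) z = cinner x z - cinner y z"
  unfolding cinner_def by (simp add: algebra_simps sum_subtractf)

lemma cinner_diff_right: "cinner z (x - y) = cinner z x - cinner z y"
  unfolding cinner_def by (simp add: algebra_simps sum_subtractf)

lemma norm_vec_power2: "norm (x::complex ^'n) ^ 2 = (\<Sum>k\<in>UNIV. cmod (x $ k) ^ 2)"
  unfolding norm_vec_def L2_set_def by (simp add: sum_nonneg)

lemma cinner_self: "cinner x x = of_real (norm x ^ 2)"
proof -
  have "of_real (norm x ^ 2) = (\<Sum>k\<in>UNIV. (of_real (cmod (x $ k) ^ 2) :: complex))"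
    by (simp only: norm_vec_power2 of_real_sum)
  then show ?thesis
    unfolding cinner_def by (simp only: complex_norm_square)
qed

lemma norm_diff_power2: "norm (u - v) ^ 2 = norm u ^ 2 + norm v ^ 2 - 2 * Re (cinner u v)"
proof -
  have Re_cinner_self: "Re (cinner w w) = norm w ^ 2" for w
    by (simp only: cinner_self Re_complex_of_real)
  have "cinner (u - v) (u - v) = cinner u u + cinner v v - (cinner u v + cnj (cinner u v))"
    by (simp add: cinner_diff_left cinner_diff_right cinner_commute[of v u])
  then show ?thesis
    by (simp add: complex_add_cnj flip: Re_cinner_self)
qed

lemma cinner_mat_left: "cinner (mat c *v y) z = c * cinner y z"
  unfolding cinner_def matrix_vector_mult_def mat_def
  by (simp add: if_distrib if_distribR sum_distrib_left mult_ac cong: if_cong)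

lemma has_sum_cinner_mult:
  fixes A :: "'i \<Rightarrow> complex ^'n ^'n"
  assumes "((\<lambda>i. adjoint_mat (A i) ** A i) has_sum S) I"
  shows "((\<lambda>i. cinner (A i *v y) (A i *v z)) has_sum cinner (S *v y) z) I"
proof -
  have "linear (\<lambda>M::complex ^'n ^'n. cinner (M *v y) z)"
    unfolding cinner_def matrix_vector_mult_def linear_iff
    by (simp add: algebra_simps sum.distrib sum_distrib_left vector_scaleR_component)
      (simp add: scaleR_conv_of_real sum_distrib_left mult_ac)
  then have "bounded_linear (\<lambda>M::complex ^'n ^'n. cinner (M *v y) z)"
    by (simp add: linear_conv_bounded_linear)
  from has_sum_bounded_linear[OF this assms] show ?thesis
    by (simp add: cinner_matrix_left flip: matrix_vector_mul_assoc)
qed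

lemma has_sum_norm_power2:
  fixes A :: "'i \<Rightarrow> complex ^'n ^'n"
  assumes "((\<lambda>i. adjoint_mat (A i) ** A i) has_sum mat c) I"
  shows "((\<lambda>i. norm (A i *v y) ^ 2) has_sum Re c * norm y ^ 2) I"
  using has_sum_Re[OF has_sum_cinner_mult[OF assms, of y y]] by (simp add: cinner_mat_left cinner_self)

definition self_comm_form :: "complex ^'n ^'n \<Rightarrow> complex ^'n \<Rightarrow> real" where
  "self_comm_form B y = norm (B *v y) ^ 2 - norm (adjoint_mat B *v y) ^ 2"

lemma self_comm_form_scaleR: "self_comm_form B (r *\<^sub>R y) = r\<^sup>2 * self_comm_form B y"
proof -
  have scale: "M *v (r *\<^sub>R y) = r *\<^sub>R (M *v y)" for M :: "complex ^_ ^_"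
    using linear_iff matrix_vector_mul_linear by blast
  show ?thesis
    by (simp add: self_comm_form_def scale power_mult_distrib algebra_simps)
qed

lemma continuous_on_self_comm_form: "continuous_on S (self_comm_form B)"
  unfolding self_comm_form_def[abs_def]
  by (intro continuous_intros linear_continuous_on matrix_vector_mul_bounded_linear)

lemma self_comm_form_attains_min:
  fixes B :: "complex ^'n ^'n"
  obtains x m where "norm x = 1" "self_comm_form B x = m"
    "\<And>y. m * norm y ^ 2 \<le> self_comm_form B y"
proof -
  have "sphere (0::complex ^'n) 1 \<noteq> {}"
    by simp
  then obtain x where x: "x \<in> sphere 0 1"
    and min: "\<forall>y\<in>sphere 0 1. self_comm_form B x \<le> self_comm_form B y"
    using continuous_attains_inf[OF compact_sphere _ continuous_on_self_comm_form] by blast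
  have "self_comm_form B x * norm y ^ 2 \<le> self_comm_form B y" for y
  proof (cases "y = 0")
    case True
    then show ?thesis by (simp add: self_comm_form_def)
  next
    case False
    then have "self_comm_form B x \<le> self_comm_form B ((1 / norm y) *\<^sub>R y)"
      using min by simp
    also have "\<dots> = self_comm_form B y / norm y ^ 2"
      by (simp add: self_comm_form_scaleR power_divide)
    finally show ?thesis
      using False by (simp add: pos_le_divide_eq)
  qed
  with x that show ?thesis
    by simp
qed

lemma sum_self_comm_form_axis: "(\<Sum>k\<in>UNIV. self_comm_form B (axis k 1)) = 0"
proof -
  have "(\<Sum>k\<in>UNIV. norm (adjoint_mat B *v axis k 1) ^ 2) = (\<Sum>k\<in>UNIV. \<Sum>l\<in>UNIV. cmod (B $ k $ l) ^ 2)"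
    by (simp add: norm_vec_power2 matrix_vector_mult_axis_nth adjoint_mat_def)
  also have "\<dots> = (\<Sum>k\<in>UNIV. norm (B *v axis k 1) ^ 2)"
    by (subst sum.swap) (simp add: norm_vec_power2 matrix_vector_mult_axis_nth)
  finally show ?thesis
    by (simp add: self_comm_form_def sum_subtractf)
qed

lemma self_comm_form_eq_0I:
  assumes "adjoint_mat B *v (B *v x) = B *v (adjoint_mat B *v x)"
  shows "self_comm_form B x = 0"
proof -
  have "cinner (B *v x) (B *v x) = cinner (adjoint_mat B *v x) (adjoint_mat B *v x)"
    by (simp only: cinner_matrix_left adjoint_mat_adjoint_mat assms)
  then show ?thesis
    by (simp only: self_comm_form_def cinner_self of_real_eq_iff diff_self)
qed

lemma commutator_defect_eq:
  assumes "B ** A = A ** B"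
  shows "norm (adjoint_mat B *v (A *v x) - A *v (adjoint_mat B *v x)) ^ 2 + self_comm_form B (A *v x)
    = norm (A *v (B *v x)) ^ 2 + norm (A *v (adjoint_mat B *v x)) ^ 2
      - 2 * Re (cinner (A *v x) (A *v ((B ** adjoint_mat B) *v x)))"
proof -
  have BA: "B *v (A *v w) = A *v (B *v w)" for w
    by (simp add: matrix_vector_mul_assoc assms)
  have "cinner (adjoint_mat B *v (A *v x)) (A *v (adjoint_mat B *v x))
      = cinner (A *v x) (B *v (A *v (adjoint_mat B *v x)))"
    using cinner_matrix_left[of "adjoint_mat B"] by simp
  also have "\<dots> = cinner (A *v x) (A *v ((B ** adjoint_mat B) *v x))"
    by (simp add: matrix_vector_mul_assoc matrix_mul_assoc assms)
  finally show ?thesis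
    by (simp add: self_comm_form_def norm_diff_power2 BA)
qed

lemma has_sum_commutator_defect:
  fixes A :: "'i \<Rightarrow> complex ^'n ^'n"
  assumes comm: "\<And>i. i \<in> I \<Longrightarrow> B ** A i = A i ** B"
    and sum: "((\<lambda>i. adjoint_mat (A i) ** A i) has_sum mat c) I"
  shows "((\<lambda>i. norm (adjoint_mat B *v (A i *v x) - A i *v (adjoint_mat B *v x)) ^ 2
      + self_comm_form B (A i *v x)) has_sum Re c * self_comm_form B x) I"
proof -
  have BBx: "cinner x ((B ** adjoint_mat B) *v x) = of_real (norm (adjoint_mat B *v x) ^ 2)"
    by (simp only: matrix_vector_mul_assoc[symmetric] cinner_matrix_right[of x B] cinner_self)
  have "((\<lambda>i. Re (cinner (A i *v x) (A i *v ((B ** adjoint_mat B) *v x))))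
      has_sum Re c * norm (adjoint_mat B *v x) ^ 2) I"
    using has_sum_Re[OF has_sum_cinner_mult[OF sum, of x "(B ** adjoint_mat B) *v x"]]
    unfolding cinner_mat_left BBx by (simp del: of_real_power)
  then have sums: "((\<lambda>i. norm (A i *v (B *v x)) ^ 2 + norm (A i *v (adjoint_mat B *v x)) ^ 2
      - 2 * Re (cinner (A i *v x) (A i *v ((B ** adjoint_mat B) *v x)))) has_sum
      Re c * norm (B *v x) ^ 2 + Re c * norm (adjoint_mat B *v x) ^ 2
      - 2 * (Re c * norm (adjoint_mat B *v x) ^ 2)) I"
    by (intro has_sum_diff has_sum_add has_sum_cmult_right has_sum_norm_power2[OF sum])
  have total: "Re c * self_comm_form B x = Re c * norm (B *v x) ^ 2
      + Re c * norm (adjoint_mat B *v x) ^ 2 - 2 * (Re c * norm (adjoint_mat B *v x) ^ 2)"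
    by (simp add: self_comm_form_def algebra_simps)
  show ?thesis
    unfolding total
    by (rule has_sum_cong[THEN iffD1, OF _ sums]) (simp only: commutator_defect_eq comm)
qed

lemma adjoint_commute_at_minimizer:
  fixes A :: "'i \<Rightarrow> complex ^'n ^'n"
  assumes comm: "\<And>i. i \<in> I \<Longrightarrow> B ** A i = A i ** B"
    and sum: "((\<lambda>i. adjoint_mat (A i) ** A i) has_sum mat c) I"
    and min: "\<And>y. m * norm y ^ 2 \<le> self_comm_form B y"
    and x: "self_comm_form B x = m * norm x ^ 2"
    and "i \<in> I"
  shows "adjoint_mat B *v (A i *v x) = A i *v (adjoint_mat B *v x)"
proof -
  define g where "g i = norm (adjoint_mat B *v (A i *v x) - A i *v (adjoint_mat B *v x)) ^ 2
    + (self_comm_form B (A i *v x) - m * norm (A i *v x) ^ 2)" for i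
  have "(g has_sum Re c * self_comm_form B x - m * (Re c * norm x ^ 2)) I"
    unfolding g_def add_diff_eq
    by (rule has_sum_diff[OF has_sum_commutator_defect[OF comm sum]
          has_sum_cmult_right[OF has_sum_norm_power2[OF sum]]])
  then have "(g has_sum 0) I"
    using x by (simp add: algebra_simps)
  moreover have "0 \<le> g j" for j
    using min[of "A j *v x"] by (simp add: g_def)
  ultimately have "g i = 0"
    using \<open>i \<in> I\<close> by (rule has_sum_0_nonnegD)
  then have "norm (adjoint_mat B *v (A i *v x) - A i *v (adjoint_mat B *v x)) ^ 2 = 0"
    using min[of "A i *v x"] unfolding g_def by (simp add: add_nonneg_eq_0_iff)
  then show ?thesis
    by simp
qed

lemma matrix_eq_axisI: "(\<And>k. M *v axis k 1 = N *v axis k 1) \<Longrightarrow> M = N"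
  by (metis matrix_vector_mult_axis_nth vec_eq_iff)

lemma adjoint_mat_commute:
  fixes A :: "'i \<Rightarrow> complex ^'n ^'n"
  assumes comm: "\<And>i j. i \<in> I \<Longrightarrow> j \<in> I \<Longrightarrow> A i ** A j = A j ** A i"
    and sum: "((\<lambda>i. adjoint_mat (A i) ** A i) has_sum mat c) I"
    and "i \<in> I" "j \<in> I"
  shows "adjoint_mat (A j) ** A i = A i ** adjoint_mat (A j)"
proof -
  let ?B = "A j"
  obtain x m where x: "norm x = 1" "self_comm_form ?B x = m"
    and min: "\<And>y. m * norm y ^ 2 \<le> self_comm_form ?B y"
    using self_comm_form_attains_min[of ?B] by blast
  note adjoint_commute = adjoint_commute_at_minimizer[OF comm[OF \<open>j \<in> I\<close>] sum min]
  have "self_comm_form ?B x = 0"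
    using adjoint_commute[of x j] x \<open>j \<in> I\<close> by (intro self_comm_form_eq_0I) simp
  then have "m = 0"
    using x by simp
  then have "self_comm_form ?B (axis k 1) = 0" for k
    using sum_self_comm_form_axis[of ?B] min by (simp add: sum_nonneg_eq_0_iff)
  then have "(adjoint_mat ?B ** A i) *v axis k 1 = (A i ** adjoint_mat ?B) *v axis k 1" for k
    using adjoint_commute[of "axis k 1" i] \<open>m = 0\<close> \<open>i \<in> I\<close>
    by (simp flip: matrix_vector_mul_assoc)
  then show ?thesis
    by (rule matrix_eq_axisI)
qed

lemma matrix_mult_commute_mult:
  assumes "X ** N = N ** X" "Y ** N = N ** Y"
  shows "(X ** Y) ** N = N ** (X ** Y)"
proof -
  have "(X ** Y) ** N = X ** (N ** Y)"
    by (simp add: matrix_mul_assoc[symmetric] assms(2))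
  also have "\<dots> = N ** (X ** Y)"
    by (simp add: matrix_mul_assoc assms(1))
  finally show ?thesis .
qed

lemma adjoint_mat_commute_adjoint:
  "X ** Y = Y ** X \<Longrightarrow> adjoint_mat X ** adjoint_mat Y = adjoint_mat Y ** adjoint_mat X"
  by (metis adjoint_mat_mult)

lemma star_alg_gen_commute:
  assumes "\<And>X. X \<in> S \<Longrightarrow> X ** M = M ** X \<and> X ** adjoint_mat M = adjoint_mat M ** X"
    and "Y \<in> star_alg_gen S"
  shows "Y ** M = M ** Y \<and> Y ** adjoint_mat M = adjoint_mat M ** Y"
  using \<open>Y \<in> star_alg_gen S\<close>
proof (induction rule: star_alg_gen.induct)
  case (gen X)
  then show ?case by (rule assms(1))
next
  case zero
  then show ?case by simp
next
  case (add X Y)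
  then show ?case by (simp add: matrix_add_ldistrib matrix_add_rdistrib)
next
  case (smult X d)
  then show ?case by (simp add: matrix_mult_commute_mult mat_mult_commute)
next
  case (mult X Y)
  then show ?case by (simp add: matrix_mult_commute_mult)
next
  case (adj X)
  then show ?case
    using adjoint_mat_commute_adjoint[of X "adjoint_mat M"] adjoint_mat_commute_adjoint[of X M] by simp
qed

lemma star_alg_gen_commutative:
  assumes gen: "\<And>X Y. X \<in> S \<Longrightarrow> Y \<in> S \<Longrightarrow> X ** Y = Y ** X \<and> X ** adjoint_mat Y = adjoint_mat Y ** X"
    and X: "X \<in> star_alg_gen S" and Y: "Y \<in> star_alg_gen S"
  shows "X ** Y = Y ** X"
proof -
  have gen_alg: "G ** Z = Z ** G" if "G \<in> S" "Z \<in> star_alg_gen S" for G Z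
    using star_alg_gen_commute[OF gen[OF _ \<open>G \<in> S\<close>] \<open>Z \<in> star_alg_gen S\<close>] by simp
  have "G ** Y = Y ** G \<and> G ** adjoint_mat Y = adjoint_mat Y ** G" if "G \<in> S" for G
    using gen_alg[OF that Y] gen_alg[OF that star_alg_gen.adj[OF Y]] by simp
  then show ?thesis
    using star_alg_gen_commute[OF _ X] by blast
qed

theorem corollary1p3:
  fixes A :: "'i \<Rightarrow> complex ^'n ^'n" and I :: "'i set" and c :: complex
  assumes comm: "\<And>i j. i \<in> I \<Longrightarrow> j \<in> I \<Longrightarrow> A i ** A j = A j ** A i"
    and sum: "((\<lambda>i. adjoint_mat (A i) ** A i) has_sum mat c) I"
  shows "(\<forall>i\<in>I. normal_mat (A i)) \<and>
         (\<forall>X\<in>star_alg_gen (A ` I). \<forall>Y\<in>star_alg_gen (A ` I). X ** Y = Y ** X)"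
proof -
  have adj_comm: "adjoint_mat (A j) ** A i = A i ** adjoint_mat (A j)" if "i \<in> I" "j \<in> I" for i j
    using adjoint_mat_commute[OF comm sum that] .
  have "\<forall>i\<in>I. normal_mat (A i)"
    using adj_comm by (simp add: normal_mat_def)
  moreover have "X ** Y = Y ** X" if "X \<in> star_alg_gen (A ` I)" "Y \<in> star_alg_gen (A ` I)" for X Y
    by (rule star_alg_gen_commutative[OF _ that]) (auto simp: comm adj_comm)
  ultimately show ?thesis
    by blast
qed

end
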